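(* Let $c$ be a joint choice on $\mathfrak{M}_Q\subseteq\prod_{q\in Q}2^{X_q}$ and let $S_1,\dots,S_m$ be nonempty subsets of $Q$ with $S_1\cap\cdots\cap S_m\neq\emptyset$, such that $c$ is $S_j$-separable for every $j\in\{1,\dots,m\}$. Suppose there is a permutation $\sigma$ of $\{1,\dots,m\}$ such that, for every $k\in\{1,\dots,m-1\}$, $\mathfrak{M}_Q$ satisfies menus betweenness with respect to the pair $S_{\sigma(1)}\cap\cdots\cap S_{\sigma(k)}$ and $S_{\sigma(k+1)}$. Then $c$ is $(S_1\cap\cdots\cap S_m)$-separable.
   Context: Let $Q=\{1,\dots,n\}$ with $n\ge 2$ be a finite set of dimensions. For each $q\in Q$, $X_q$ is a nonempty finite set, and $2^{X_q}$ denotes the family of nonempty subsets of $X_q$. A (multidimensional) menu is a tuple $A_Q=(A_q)_{q\in Q}\in\prod_{q\in Q}2^{X_q}$; its alternatives are the elements $x_Q=(x_q)_{q\in Q}$ of $\prod_{q\in Q}A_q$. Let $\mathfrak{M}_Q\subseteq\prod_{q\in Q}2^{X_q}$ be a nonempty family of menus. A joint choice on $\mathfrak{M}_Q$ is a map $c$ assigning to each $A_Q\in\mathfrak{M}_Q$ a set $c(A_Q)$ with $\emptyset\neq c(A_Q)\subseteq\prod_{q\in Q}A_q$. For nonempty $S\subseteq Q$, write $-S=Q\setminus S$, $x_S=(x_q)_{q\in S}$, and $\pi_S$ for the projection $x_Q\mapsto x_S$ from $\prod_{q\in Q}X_q$ to $\prod_{q\in S}X_q$, extended to sets of alternatives by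 taking images, and to menus by $\pi_S(A_Q)=A_S:=(A_q)_{q\in S}$; set $\pi_S(\mathfrak{M}_Q)=\{\pi_S(A_Q):A_Q\in\mathfrak{M}_Q\}$. For $A_S=(A_q)_{q\in S}$ and $B_{-S}=(B_q)_{q\in -S}$, $(A_S,B_{-S})$ denotes the menu whose $q$-component is $A_q$ for $q\in S$ and $B_q$ for $q\in -S$. A joint choice $c$ on $\mathfrak{M}_Q$ is $S$-separable (for nonempty $S\subseteq Q$) if $\pi_S(c(A_S,B_{-S}))=\pi_S(c(A_S,C_{-S}))$ for all $A_S\in\pi_S(\mathfrak{M}_Q)$ and $B_{-S},C_{-S}\in\pi_{-S}(\mathfrak{M}_Q)$ such that $(A_S,B_{-S}),(A_S,C_{-S})\in\mathfrak{M}_Q$ (for $S=Q$ this condition is vacuous). For nonempty $S,T\subseteq Q$, the family $\mathfrak{M}_Q$ satisfies menus betweenness with respect to $S$ and $T$ if for all $A_Q,B_Q\in\mathfrak{M}_Q$ with $\pi_{S\cap T}(A_Q)=\pi_{S\cap T}(B_Q)$ there is $E_Q\in\mathfrak{M}_Q$ with $\pi_S(E_Q)=\pi_S(A_Q)$ and $\pi_T(E_Q)=\pi_T(B_Q)$. *)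

theory Defs
  imports "HOL-Library.FuncSet"
begin

text \<open>A menu is a function A on Q (extensional, undefined outside Q) with A q a nonempty subset of X q.
An alternative is an element of PiE Q A.  Projection onto S is restriction to S.\<close>

definition menus :: "nat set \<Rightarrow> (nat \<Rightarrow> 'a set) \<Rightarrow> (nat \<Rightarrow> 'a set) set" where
  "menus Q X = PiE Q (\<lambda>q. {B. B \<noteq> {} \<and> B \<subseteq> X q})"

definition joint_choice :: "nat set \<Rightarrow> (nat \<Rightarrow> 'a set) set \<Rightarrow> ((nat \<Rightarrow> 'a set) \<Rightarrow> (nat \<Rightarrow> 'a) set) \<Rightarrow> bool" where
  "joint_choice Q M c \<longleftrightarrow> (\<forall>A\<in>M. c A \<noteq> {} \<and> c A \<subseteq> PiE Q A)"

definition merge :: "nat set \<Rightarrow> nat set \<Rightarrow> (nat \<Rightarrow> 'b) \<Rightarrow> (nat \<Rightarrow> 'b) \<Rightarrow> (nat \<Rightarrow> 'b)" where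
  "merge Q S A B = restrict (\<lambda>q. if q \<in> S then A q else B q) Q"

definition separable :: "nat set \<Rightarrow> (nat \<Rightarrow> 'a set) set \<Rightarrow> ((nat \<Rightarrow> 'a set) \<Rightarrow> (nat \<Rightarrow> 'a) set) \<Rightarrow> nat set \<Rightarrow> bool" where
  "separable Q M c S \<longleftrightarrow>
     (\<forall>A\<in>(\<lambda>D. restrict D S) ` M. \<forall>B\<in>(\<lambda>D. restrict D (Q - S)) ` M. \<forall>C\<in>(\<lambda>D. restrict D (Q - S)) ` M.
        merge Q S A B \<in> M \<and> merge Q S A C \<in> M \<longrightarrow>
        (\<lambda>x. restrict x S) ` c (merge Q S A B) = (\<lambda>x. restrict x S) ` c (merge Q S A C))"

definition menus_betweenness :: "(nat \<Rightarrow> 'a set) set \<Rightarrow> nat set \<Rightarrow> nat set \<Rightarrow> bool" where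
  "menus_betweenness M S T \<longleftrightarrow>
     (\<forall>A\<in>M. \<forall>B\<in>M. restrict A (S \<inter> T) = restrict B (S \<inter> T) \<longrightarrow>
        (\<exists>E\<in>M. restrict E S = restrict A S \<and> restrict E T = restrict B T))"

end

theory Submission
  imports Defs
begin

text \<open>Separability says that the S-part of the choice depends only on the S-part of the menu.
Two menus agreeing on S \<inter> T are linked, by betweenness, through a third menu agreeing with the
first on S and with the second on T, so S- and T-separability together yield
(S \<inter> T)-separability; intersecting the S j one at a time in the order \<sigma> gives the theorem.\<close>

definition choice_determined_on ::
  "(nat \<Rightarrow> 'a set) set \<Rightarrow> ((nat \<Rightarrow> 'a set) \<Rightarrow> (nat \<Rightarrow> 'a) set) \<Rightarrow> nat set \<Rightarrow> bool" where
  "choice_determined_on M c S \<longleftrightarrow>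
     (\<forall>D1\<in>M. \<forall>D2\<in>M. restrict D1 S = restrict D2 S \<longrightarrow>
        (\<lambda>x. restrict x S) ` c D1 = (\<lambda>x. restrict x S) ` c D2)"

lemma merge_restrict_self:
  assumes "D \<in> extensional Q"
  shows "merge Q S (restrict D S) (restrict D (Q - S)) = D"
  using assms unfolding merge_def by (auto simp: extensional_def fun_eq_iff)

lemma restrict_merge:
  assumes "D \<in> extensional Q"
  shows "restrict (merge Q S (restrict D S) B) S = restrict D S"
  using assms unfolding merge_def by (auto simp: extensional_def fun_eq_iff)

lemma separable_iff_choice_determined_on:
  assumes "M \<subseteq> extensional Q"
  shows "separable Q M c S \<longleftrightarrow> choice_determined_on M c S"
proof
  assume sep: "separable Q M c S"
  show "choice_determined_on M c S"
    unfolding choice_determined_on_def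
  proof (intro ballI impI)
    fix D1 D2 assume D: "D1 \<in> M" "D2 \<in> M" and agree: "restrict D1 S = restrict D2 S"
    have "D1 \<in> extensional Q" "D2 \<in> extensional Q" using D assms by auto
    then have "merge Q S (restrict D1 S) (restrict D1 (Q - S)) = D1"
      and "merge Q S (restrict D1 S) (restrict D2 (Q - S)) = D2"
      using merge_restrict_self agree by metis+
    moreover have "restrict D1 S \<in> (\<lambda>D. restrict D S) ` M"
      and "restrict D1 (Q - S) \<in> (\<lambda>D. restrict D (Q - S)) ` M"
      and "restrict D2 (Q - S) \<in> (\<lambda>D. restrict D (Q - S)) ` M"
      using D by blast+
    ultimately show "(\<lambda>x. restrict x S) ` c D1 = (\<lambda>x. restrict x S) ` c D2"
      using sep D unfolding separable_def by metis
  qed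
next
  assume det: "choice_determined_on M c S"
  show "separable Q M c S"
    unfolding separable_def
  proof (intro ballI impI)
    fix A B C
    assume "A \<in> (\<lambda>D. restrict D S) ` M" and merged: "merge Q S A B \<in> M \<and> merge Q S A C \<in> M"
    then obtain D where D: "D \<in> M" "A = restrict D S" by auto
    then have "D \<in> extensional Q" using assms by auto
    then have "restrict (merge Q S A B) S = restrict (merge Q S A C) S"
      using restrict_merge D(2) by metis
    then show "(\<lambda>x. restrict x S) ` c (merge Q S A B) = (\<lambda>x. restrict x S) ` c (merge Q S A C)"
      using det merged unfolding choice_determined_on_def by blast
  qed
qed

lemma image_restrict_subset:
  assumes "U \<subseteq> S"
  shows "(\<lambda>x. restrict x U) ` Y = (\<lambda>x. restrict x U) ` (\<lambda>x. restrict x S) ` Y"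
proof -
  have "S \<inter> U = U" using assms by blast
  then show ?thesis by (simp add: image_image)
qed

lemma choice_determined_on_Int:
  assumes "choice_determined_on M c S" "choice_determined_on M c T"
    and "menus_betweenness M S T"
  shows "choice_determined_on M c (S \<inter> T)"
  unfolding choice_determined_on_def
proof (intro ballI impI)
  fix D1 D2 assume D: "D1 \<in> M" "D2 \<in> M" and agree: "restrict D1 (S \<inter> T) = restrict D2 (S \<inter> T)"
  obtain E where E: "E \<in> M" "restrict E S = restrict D1 S" "restrict E T = restrict D2 T"
    using assms(3) D agree unfolding menus_betweenness_def by blast
  have on_S: "(\<lambda>x. restrict x S) ` c D1 = (\<lambda>x. restrict x S) ` c E"
    using assms(1) D(1) E(1,2) unfolding choice_determined_on_def by metis
  have on_T: "(\<lambda>x. restrict x T) ` c E = (\<lambda>x. restrict x T) ` c D2"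
    using assms(2) D(2) E(1,3) unfolding choice_determined_on_def by metis
  have "(\<lambda>x. restrict x (S \<inter> T)) ` c D1 = (\<lambda>x. restrict x (S \<inter> T)) ` c E"
    using image_restrict_subset[of "S \<inter> T" S] on_S by (metis inf_le1)
  also have "\<dots> = (\<lambda>x. restrict x (S \<inter> T)) ` c D2"
    using image_restrict_subset[of "S \<inter> T" T] on_T by (metis inf_le2)
  finally show "(\<lambda>x. restrict x (S \<inter> T)) ` c D1 = (\<lambda>x. restrict x (S \<inter> T)) ` c D2" .
qed

lemma choice_determined_on_INT_chain:
  assumes "\<And>i. i \<in> {1..m} \<Longrightarrow> choice_determined_on M c (T i)"
    and "\<And>k. k \<in> {1..m-1} \<Longrightarrow> menus_betweenness M (\<Inter>i\<in>{1..k}. T i) (T (Suc k))"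
    and "1 \<le> k" "k \<le> m"
  shows "choice_determined_on M c (\<Inter>i\<in>{1..k}. T i)"
  using assms(3,4)
proof (induction k rule: nat_induct_at_least)
  case base
  then show ?case using assms(1) by simp
next
  case (Suc k)
  have "(\<Inter>i\<in>{1..Suc k}. T i) = (\<Inter>i\<in>{1..k}. T i) \<inter> T (Suc k)"
    using Suc.hyps by (auto simp: atLeastAtMostSuc_conv)
  moreover have "menus_betweenness M (\<Inter>i\<in>{1..k}. T i) (T (Suc k))"
    using assms(2) Suc.hyps Suc.prems by simp
  moreover have "choice_determined_on M c (T (Suc k))"
    using assms(1) Suc.hyps Suc.prems by simp
  ultimately show ?case
    using choice_determined_on_Int Suc.IH Suc.prems by simp
qed

theorem mainTheorem4:
  fixes n m :: nat and X :: "nat \<Rightarrow> 'a set" and M :: "(nat \<Rightarrow> 'a set) set"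
    and c :: "(nat \<Rightarrow> 'a set) \<Rightarrow> (nat \<Rightarrow> 'a) set"
    and S :: "nat \<Rightarrow> nat set" and \<sigma> :: "nat \<Rightarrow> nat"
  assumes "n \<ge> 2"
    and "\<forall>q\<in>{1..n}. finite (X q) \<and> X q \<noteq> {}"
    and "M \<noteq> {}" and "M \<subseteq> menus {1..n} X"
    and "joint_choice {1..n} M c"
    and "m \<ge> 1"
    and "\<forall>j\<in>{1..m}. S j \<noteq> {} \<and> S j \<subseteq> {1..n}"
    and "(\<Inter>j\<in>{1..m}. S j) \<noteq> {}"
    and "\<forall>j\<in>{1..m}. separable {1..n} M c (S j)"
    and "bij_betw \<sigma> {1..m} {1..m}"
    and "\<forall>k\<in>{1..m-1}. menus_betweenness M (\<Inter>i\<in>{1..k}. S (\<sigma> i)) (S (\<sigma> (k+1)))"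
  shows "separable {1..n} M c (\<Inter>j\<in>{1..m}. S j)"
proof -
  have ext: "M \<subseteq> extensional {1..n}"
    using assms(4) unfolding menus_def by (auto simp: PiE_iff)
  have perm: "\<sigma> ` {1..m} = {1..m}"
    using assms(10) bij_betw_imp_surj_on by blast
  have "choice_determined_on M c (S (\<sigma> i))" if "i \<in> {1..m}" for i
    using assms(9) that perm separable_iff_choice_determined_on[OF ext] by blast
  then have "choice_determined_on M c (\<Inter>i\<in>{1..m}. S (\<sigma> i))"
    using choice_determined_on_INT_chain[of m M c "\<lambda>i. S (\<sigma> i)" m] assms(6,11) by simp
  moreover have "(\<Inter>i\<in>{1..m}. S (\<sigma> i)) = (\<Inter>j\<in>{1..m}. S j)"
    by (metis perm image_image)
  ultimately show ?thesis
    using separable_iff_choice_determined_on[OF ext] by simp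
qed

end
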